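(* Consider dynamic bin packing with migration delays with delay cost $C$. For any $C\ge1$, there is a family of instances with minimum item duration $1$ and maximum item duration $\mu=\sqrt{C}$ on which every randomized online algorithm is at least $\frac{\sqrt{C}}{30}$-competitive (i.e., for every randomized online algorithm there is an instance in the family on which its expected cost is at least $\frac{\sqrt{C}}{30}$ times the optimum).
   Context: Dynamic bin packing with migration delays: bins have capacity $1$; items arrive online at times $a_i\ge0$ with size $s_i\in[0,1]$ and duration $d_i>0$; only the size is revealed at arrival. Each item is placed on arrival into an open bin with enough remaining capacity or a new bin; the algorithm may migrate items to other bins, and each migration of an item increases its duration by $C$. A bin is open while nonempty; the cost is $\int_0^\infty(\text{number of open bins at } t)\,dt$. The optimum is $\mathrm{OPT}(I)=\int_0^\infty\mathrm{OPT}_t\,dt$, where $\mathrm{OPT}_t$ is the minimum number of unit bins needed to pack the items present at time $t$ in the original instance (arbitrary repacking with no delay). *)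

theory Defs
  imports "HOL-Probability.Probability"
begin

text \<open>An instance is a finite
list of items, listed in order of non-decreasing arrival time (ties are arrived
simultaneously; the list index is the identity of the item).\<close>

type_synonym item = "real \<times> real \<times> real"
type_synonym bp_instance = "item list"

definition arr :: "bp_instance \<Rightarrow> nat \<Rightarrow> real" where
  "arr I i = fst (I ! i)"
definition sz :: "bp_instance \<Rightarrow> nat \<Rightarrow> real" where
  "sz I i = fst (snd (I ! i))"
definition dur :: "bp_instance \<Rightarrow> nat \<Rightarrow> real" where
  "dur I i = snd (snd (I ! i))"

definition valid_instance :: "bp_instance \<Rightarrow> bool" where
  "valid_instance I \<longleftrightarrow>
     sorted (map fst I) \<and>
     (\<forall>i<length I. 0 \<le> arr I i \<and> 0 \<le> sz I i \<and> sz I i \<le> 1 \<and> 0 < dur I i)"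

text \<open>A schedule assigns to every item (by index) the bin it is put into on arrival
and the list of its migrations, each given as (time of migration, target bin).
Bins are identified by natural numbers; a bin is open while it is nonempty, so
using an index of a currently empty bin means opening a new bin.\<close>

type_synonym schedule = "nat \<Rightarrow> nat \<times> (real \<times> nat) list"

definition depart :: "real \<Rightarrow> bp_instance \<Rightarrow> schedule \<Rightarrow> nat \<Rightarrow> real" where
  "depart C I \<sigma> i = arr I i + dur I i + C * real (length (snd (\<sigma> i)))"

definition present :: "real \<Rightarrow> bp_instance \<Rightarrow> schedule \<Rightarrow> nat \<Rightarrow> real \<Rightarrow> bool" where
  "present C I \<sigma> i t \<longleftrightarrow> i < length I \<and> arr I i \<le> t \<and> t < depart C I \<sigma> i"

definition bin_at :: "schedule \<Rightarrow> nat \<Rightarrow> real \<Rightarrow> nat" where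
  "bin_at \<sigma> i t = foldl (\<lambda>b (\<tau>, b'). if \<tau> \<le> t then b' else b) (fst (\<sigma> i)) (snd (\<sigma> i))"

text \<open>Validity of a schedule: migrations happen in chronological order, while the
item is present (the (j+1)-th migration happens before the departure time
resulting from the first j migrations), and no bin is ever over capacity.\<close>

definition valid_schedule :: "real \<Rightarrow> bp_instance \<Rightarrow> schedule \<Rightarrow> bool" where
  "valid_schedule C I \<sigma> \<longleftrightarrow>
     (\<forall>i<length I.
        sorted (map fst (snd (\<sigma> i))) \<and>
        (\<forall>j<length (snd (\<sigma> i)).
           arr I i \<le> fst (snd (\<sigma> i) ! j) \<and>
           fst (snd (\<sigma> i) ! j) < arr I i + dur I i + C * real j)) \<and>
     (\<forall>t b. (\<Sum>i\<in>{i. present C I \<sigma> i t \<and> bin_at \<sigma> i t = b}. sz I i) \<le> 1)"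

definition open_bins :: "real \<Rightarrow> bp_instance \<Rightarrow> schedule \<Rightarrow> real \<Rightarrow> nat" where
  "open_bins C I \<sigma> t = card {b. \<exists>i. present C I \<sigma> i t \<and> bin_at \<sigma> i t = b}"

definition sched_cost :: "real \<Rightarrow> bp_instance \<Rightarrow> schedule \<Rightarrow> ennreal" where
  "sched_cost C I \<sigma> = (\<integral>\<^sup>+ t. ennreal (real (open_bins C I \<sigma> t)) \<partial>lborel)"

text \<open>Offline optimum: at every time the minimum number of unit bins needed to
pack the items present at that time in the original bp_instance (no delays).\<close>

definition min_bins :: "bp_instance \<Rightarrow> nat set \<Rightarrow> nat" where
  "min_bins I S = (LEAST k. \<exists>f :: nat \<Rightarrow> nat. (\<forall>i\<in>S. f i < k) \<and>
                      (\<forall>b. (\<Sum>i\<in>{i\<in>S. f i = b}. sz I i) \<le> 1))"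

definition OPT_t :: "bp_instance \<Rightarrow> real \<Rightarrow> nat" where
  "OPT_t I t = min_bins I {i. i < length I \<and> arr I i \<le> t \<and> t < arr I i + dur I i}"

definition OPT :: "bp_instance \<Rightarrow> ennreal" where
  "OPT I = (\<integral>\<^sup>+ t. ennreal (real (OPT_t I t)) \<partial>lborel)"

text \<open>Online information: what has been revealed by time t (arrived items with
their arrival times and sizes, and for each, whether and when it has departed).
Durations are never revealed directly.\<close>

definition observed :: "real \<Rightarrow> bp_instance \<Rightarrow> schedule \<Rightarrow> real
                          \<Rightarrow> (real \<times> real \<times> real option) list" where
  "observed C I \<sigma> t =
     map (\<lambda>i. (arr I i, sz I i,
               if depart C I \<sigma> i \<le> t then Some (depart C I \<sigma> i) else None))
         (filter (\<lambda>i. arr I i \<le> t) [0..<length I])"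

definition agree_upto :: "bp_instance \<Rightarrow> schedule \<Rightarrow> schedule \<Rightarrow> real \<Rightarrow> bool" where
  "agree_upto I \<sigma> \<tau> t \<longleftrightarrow>
     (\<forall>i<length I. arr I i \<le> t \<longrightarrow>
        fst (\<sigma> i) = fst (\<tau> i) \<and>
        filter (\<lambda>m. fst m \<le> t) (snd (\<sigma> i)) = filter (\<lambda>m. fst m \<le> t) (snd (\<tau> i)))"

type_synonym algorithm = "bp_instance \<Rightarrow> schedule"

definition online_alg :: "real \<Rightarrow> algorithm \<Rightarrow> bool" where
  "online_alg C A \<longleftrightarrow>
     (\<forall>I. valid_instance I \<longrightarrow> valid_schedule C I (A I)) \<and>
     (\<forall>I J t. valid_instance I \<longrightarrow> valid_instance J \<longrightarrow>
        observed C I (A I) t = observed C J (A J) t \<longrightarrow> agree_upto I (A I) (A J) t)"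

definition randomized_online_alg :: "real \<Rightarrow> 'w measure \<Rightarrow> ('w \<Rightarrow> algorithm) \<Rightarrow> bool" where
  "randomized_online_alg C M A \<longleftrightarrow>
     prob_space M \<and>
     (\<forall>\<omega>\<in>space M. online_alg C (A \<omega>)) \<and>
     (\<forall>I. valid_instance I \<longrightarrow> (\<lambda>\<omega>. sched_cost C I (A \<omega> I)) \<in> borel_measurable M)"

definition expected_cost :: "real \<Rightarrow> 'w measure \<Rightarrow> ('w \<Rightarrow> algorithm) \<Rightarrow> bp_instance \<Rightarrow> ennreal" where
  "expected_cost C M A I = (\<integral>\<^sup>+ \<omega>. sched_cost C I (A \<omega> I) \<partial>M)"

end

theory Submission
  imports Defs
begin

(* The adversary releases q^2 items of size 1/q at time 0, with q the least integer above
   \<mu> = sqrt C; a hidden set L of q of them lasts \<mu>, all others last 1, so OPT <= q + \<mu>.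
   At time 0 an online algorithm cannot tell the instances apart, hence its initial bins and
   its migrations at time 0 do not depend on L.  A long item that is never migrated keeps its
   initial bin open for time \<mu>; a migrated item is delayed by C and occupies volume 1/q up to
   time 1 + C >= \<mu> q / 2.  So the cost is at least \<mu>/4 times the number of initial bins
   met by unmigrated long items plus the number of migrated long items.  As a bin holds at
   most q items at time 0, a uniformly random q-subset L of the q^2 items has on average at
   most q ordered pairs sharing an initial bin, which gives average cost >= \<mu> q / 8 over L,
   and then some L forces this expected cost on any randomized algorithm. *)

definition collisions :: "('a \<Rightarrow> 'b) \<Rightarrow> 'a set \<Rightarrow> ('a \<times> 'a) set" where
  "collisions f S = {(x, y). x \<in> S \<and> y \<in> S \<and> x \<noteq> y \<and> f x = f y}"

lemma finite_collisions: "finite S \<Longrightarrow> finite (collisions f S)"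
  by (rule finite_subset[of _ "S \<times> S"]) (auto simp: collisions_def)

lemma collisions_mono: "S \<subseteq> T \<Longrightarrow> collisions f S \<subseteq> collisions f T"
  by (auto simp: collisions_def)

lemma card_image_ge_card_minus_collisions:
  assumes "finite S"
  shows "real (card S) - real (card (collisions f S)) / 2 \<le> real (card (f ` S))"
  using assms
proof (induction S rule: finite_induct)
  case empty
  then show ?case by simp
next
  case (insert x S)
  have fin: "finite (collisions f (insert x S))"
    using insert.hyps(1) by (simp add: finite_collisions)
  show ?case
  proof (cases "f x \<in> f ` S")
    case True
    then obtain y where y: "y \<in> S" "f y = f x" by auto
    with insert.hyps(2) have "x \<noteq> y" by auto
    have new: "(x, y) \<notin> collisions f S" "(y, x) \<notin> collisions f S"
      using insert.hyps(2) by (auto simp: collisions_def)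
    have "insert (x, y) (insert (y, x) (collisions f S)) \<subseteq> collisions f (insert x S)"
      using y \<open>x \<noteq> y\<close> by (auto simp: collisions_def)
    from card_mono[OF fin this] have "card (collisions f S) + 2 \<le> card (collisions f (insert x S))"
      using new \<open>x \<noteq> y\<close> finite_collisions[OF insert.hyps(1), of f] by simp
    moreover have "f ` insert x S = f ` S" using True by auto
    ultimately show ?thesis using insert by simp
  next
    case False
    have "card (collisions f S) \<le> card (collisions f (insert x S))"
      by (rule card_mono[OF fin collisions_mono]) auto
    moreover have "card (f ` insert x S) = card (f ` S) + 1"
      using False insert.hyps(1) by simp
    ultimately show ?thesis using insert by simp
  qed
qed

lemma card_minus_collisions_le:
  assumes "finite L" "U \<subseteq> L \<inter> G"
  shows "real (card L) - real (card (collisions f (L \<inter> G))) / 2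
           \<le> real (card (f ` U)) + real (card (L - U))"
proof -
  have "finite U" "U \<subseteq> L"
    using assms finite_subset by auto
  have "card (collisions f U) \<le> card (collisions f (L \<inter> G))"
    using assms by (intro card_mono finite_collisions collisions_mono) auto
  moreover have "card (L - U) = card L - card U" "card U \<le> card L"
    using \<open>finite U\<close> \<open>U \<subseteq> L\<close> assms(1) by (auto simp: card_Diff_subset card_mono)
  ultimately show ?thesis
    using card_image_ge_card_minus_collisions[OF \<open>finite U\<close>, of f] by simp
qed

lemma card_collisions_le:
  assumes "finite S" and "\<And>y. card {x \<in> S. f x = y} \<le> c"
  shows "card (collisions f S) \<le> card S * c"
proof -
  have "collisions f S \<subseteq> (SIGMA x:S. {y \<in> S. f y = f x})"
    by (auto simp: collisions_def)
  then have "card (collisions f S) \<le> card (SIGMA x:S. {y \<in> S. f y = f x})"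
    by (rule card_mono[rotated]) (use assms(1) in auto)
  also have "\<dots> = (\<Sum>x\<in>S. card {y \<in> S. f y = f x})"
    using assms(1) by simp
  also have "\<dots> \<le> card S * c"
    using sum_bounded_above[of S "\<lambda>x. card {y \<in> S. f y = f x}" c] assms(2) by simp
  finally show ?thesis .
qed

lemma card_subsets_containing_two:
  assumes "finite A" "x \<in> A" "y \<in> A" "x \<noteq> y" "2 \<le> k"
  shows "card {L. L \<subseteq> A \<and> card L = k \<and> x \<in> L \<and> y \<in> L} = (card A - 2) choose (k - 2)"
proof -
  let ?D = "{L. L \<subseteq> A - {x, y} \<and> card L = k - 2}"
  have "bij_betw (\<lambda>L. insert x (insert y L)) ?D {L. L \<subseteq> A \<and> card L = k \<and> x \<in> L \<and> y \<in> L}"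
  proof (rule bij_betw_byWitness[where f' = "\<lambda>L. L - {x, y}"])
    show "\<forall>L\<in>?D. insert x (insert y L) - {x, y} = L" by auto
    show "\<forall>L\<in>{L. L \<subseteq> A \<and> card L = k \<and> x \<in> L \<and> y \<in> L}. insert x (insert y (L - {x, y})) = L"
      by auto
    show "(\<lambda>L. insert x (insert y L)) ` ?D \<subseteq> {L. L \<subseteq> A \<and> card L = k \<and> x \<in> L \<and> y \<in> L}"
    proof (rule image_subsetI)
      fix L assume "L \<in> ?D"
      then have L: "L \<subseteq> A - {x, y}" "card L = k - 2" by auto
      moreover have "finite L" using L(1) assms(1) finite_subset by blast
      moreover have "x \<notin> L" "y \<notin> L" using L(1) by auto
      ultimately show "insert x (insert y L) \<in> {L. L \<subseteq> A \<and> card L = k \<and> x \<in> L \<and> y \<in> L}"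
        using assms by auto
    qed
    show "(\<lambda>L. L - {x, y}) ` {L. L \<subseteq> A \<and> card L = k \<and> x \<in> L \<and> y \<in> L} \<subseteq> ?D"
      using assms(4) by (auto simp: card_Diff_subset)
  qed
  then have "card {L. L \<subseteq> A \<and> card L = k \<and> x \<in> L \<and> y \<in> L} = card ?D"
    by (simp add: bij_betw_same_card)
  also have "\<dots> = card (A - {x, y}) choose (k - 2)"
    using assms(1) by (simp add: n_subsets)
  also have "card (A - {x, y}) = card A - 2"
    using assms by (simp add: card_Diff_subset)
  finally show ?thesis .
qed

lemma sum_card_collisions_subsets:
  assumes "finite A" "G \<subseteq> A" "2 \<le> k"
  shows "(\<Sum>L | L \<subseteq> A \<and> card L = k. card (collisions f (L \<inter> G)))
           = ((card A - 2) choose (k - 2)) * card (collisions f G)"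
proof -
  let ?F = "{L. L \<subseteq> A \<and> card L = k}"
  have "collisions f (L \<inter> G) = {p \<in> collisions f G. fst p \<in> L \<and> snd p \<in> L}" for L
    by (auto simp: collisions_def)
  then have "(\<Sum>L\<in>?F. card (collisions f (L \<inter> G)))
               = (\<Sum>L\<in>?F. card {p \<in> collisions f G. fst p \<in> L \<and> snd p \<in> L})"
    by simp
  also have "\<dots> = ((card A - 2) choose (k - 2)) * card (collisions f G)"
  proof (rule sum_multicount)
    show "finite ?F" using assms(1) by (simp add: finite_subset)
    show "finite (collisions f G)" using assms(1,2) finite_subset finite_collisions by blast
    show "\<forall>p\<in>collisions f G. card {L \<in> ?F. fst p \<in> L \<and> snd p \<in> L} = (card A - 2) choose (k - 2)"
    proof
      fix p assume "p \<in> collisions f G"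
      then obtain x y where "p = (x, y)" "x \<in> A" "y \<in> A" "x \<noteq> y"
        using assms(2) by (auto simp: collisions_def)
      then show "card {L \<in> ?F. fst p \<in> L \<and> snd p \<in> L} = (card A - 2) choose (k - 2)"
        using card_subsets_containing_two[OF assms(1) _ _ _ assms(3)] by simp
    qed
  qed
  finally show ?thesis .
qed

lemma binomial_absorption_twice:
  assumes "2 \<le> k"
  shows "n * (n - 1) * ((n - 2) choose (k - 2)) = k * (k - 1) * (n choose k)"
proof -
  have "(k - 1) * ((n - 1) choose (k - 1)) = (n - 1) * ((n - 2) choose (k - 2))"
    using times_binomial_minus1_eq[of "k - 1" "n - 1"] assms by (simp add: numeral_2_eq_2)
  then have "n * (n - 1) * ((n - 2) choose (k - 2)) = (k - 1) * (n * ((n - 1) choose (k - 1)))"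
    by (simp add: ac_simps)
  also have "n * ((n - 1) choose (k - 1)) = k * (n choose k)"
    using times_binomial_minus1_eq[of k n] assms by simp
  finally show ?thesis
    by (simp add: ac_simps)
qed

lemma sum_card_collisions_subsets_le:
  assumes "finite A" "G \<subseteq> A" "2 \<le> k" "\<And>y. card {x \<in> G. f x = y} \<le> c"
  shows "(card A - 1) * (\<Sum>L | L \<subseteq> A \<and> card L = k. card (collisions f (L \<inter> G)))
           \<le> c * k * (k - 1) * (card A choose k)"
proof -
  have "card (collisions f G) \<le> card A * c"
    using card_collisions_le[OF finite_subset[OF assms(2,1)] assms(4)]
      card_mono[OF assms(1,2)] by (meson le_trans mult_le_mono1)
  then have "(card A - 1) * (((card A - 2) choose (k - 2)) * card (collisions f G))
               \<le> (card A - 1) * (((card A - 2) choose (k - 2)) * (card A * c))"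
    by simp
  also have "\<dots> = c * (card A * (card A - 1) * ((card A - 2) choose (k - 2)))"
    by (simp add: ac_simps)
  also have "\<dots> = c * k * (k - 1) * (card A choose k)"
    unfolding binomial_absorption_twice[OF assms(3)] by (simp add: ac_simps)
  finally show ?thesis
    by (simp add: sum_card_collisions_subsets[OF assms(1-3)])
qed

lemma bin_at_before_migrations:
  assumes "\<forall>m\<in>set (snd (\<sigma> i)). t < fst m"
  shows "bin_at \<sigma> i t = fst (\<sigma> i)"
proof -
  have "foldl (\<lambda>b (\<tau>, b'). if \<tau> \<le> t then b' else b) b0 ms = b0"
    if "\<forall>m\<in>set ms. t < fst m" for b0 and ms :: "(real \<times> nat) list"
    using that by (induction ms) auto
  then show ?thesis
    using assms unfolding bin_at_def by blast
qed

lemma finite_present: "finite {i. present C I \<sigma> i t}"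
  by (rule finite_subset[of _ "{..<length I}"]) (auto simp: present_def)

lemma open_bins_eq_card_image:
  "open_bins C I \<sigma> t = card ((\<lambda>i. bin_at \<sigma> i t) ` {i. present C I \<sigma> i t})"
  unfolding open_bins_def by (rule arg_cong[where f = card]) auto

lemma sum_sz_present_le_open_bins:
  assumes "valid_schedule C I \<sigma>"
  shows "(\<Sum>i | present C I \<sigma> i t. sz I i) \<le> real (open_bins C I \<sigma> t)"
proof -
  let ?P = "{i. present C I \<sigma> i t}"
  let ?bin = "\<lambda>i. bin_at \<sigma> i t"
  have "(\<Sum>i\<in>?P. sz I i) = (\<Sum>b\<in>?bin ` ?P. \<Sum>i | i \<in> ?P \<and> ?bin i = b. sz I i)"
    by (rule sum.group[symmetric]) (simp_all add: finite_present)
  also have "\<dots> \<le> (\<Sum>b\<in>?bin ` ?P. 1)"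
    using assms unfolding valid_schedule_def by (intro sum_mono) simp
  also have "\<dots> = real (open_bins C I \<sigma> t)"
    by (simp add: open_bins_eq_card_image)
  finally show ?thesis .
qed

lemma sched_cost_ge:
  assumes "\<And>t. 0 \<le> t \<Longrightarrow> t < T \<Longrightarrow> c \<le> real (open_bins C I \<sigma> t)" "0 \<le> c" "0 \<le> T"
  shows "ennreal (c * T) \<le> sched_cost C I \<sigma>"
proof -
  have "ennreal (c * T) = (\<integral>\<^sup>+ t. ennreal c * indicator {0..<T} t \<partial>lborel)"
    using assms(2,3) by (simp add: nn_integral_cmult_indicator ennreal_mult)
  also have "\<dots> \<le> sched_cost C I \<sigma>"
    unfolding sched_cost_def
    by (intro nn_integral_mono) (auto simp: indicator_def intro: assms(1))
  finally show ?thesis .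
qed

lemma sched_cost_ge_unmigrated:
  assumes "\<And>i. i \<in> U \<Longrightarrow> i < length I \<and> arr I i = 0 \<and> T \<le> dur I i \<and> snd (\<sigma> i) = []"
    and "0 \<le> T"
  shows "ennreal (real (card ((\<lambda>i. fst (\<sigma> i)) ` U)) * T) \<le> sched_cost C I \<sigma>"
proof (rule sched_cost_ge)
  fix t :: real assume t: "0 \<le> t" "t < T"
  have "(\<lambda>i. fst (\<sigma> i)) ` U \<subseteq> (\<lambda>i. bin_at \<sigma> i t) ` {i. present C I \<sigma> i t}"
  proof (rule image_subsetI)
    fix i assume "i \<in> U"
    with assms(1) t have "present C I \<sigma> i t" and "bin_at \<sigma> i t = fst (\<sigma> i)"
      by (fastforce simp: present_def depart_def bin_at_def)+
    then show "fst (\<sigma> i) \<in> (\<lambda>i. bin_at \<sigma> i t) ` {i. present C I \<sigma> i t}"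
      by (metis imageI mem_Collect_eq)
  qed
  then show "real (card ((\<lambda>i. fst (\<sigma> i)) ` U)) \<le> real (open_bins C I \<sigma> t)"
    unfolding open_bins_eq_card_image by (simp add: card_mono finite_present)
qed (use assms(2) in auto)

text \<open>Each migrated item is delayed by at least C, so it keeps occupying capacity during
  the whole interval [0, 1 + C).\<close>

lemma sched_cost_ge_migrated:
  assumes "valid_instance I" "valid_schedule C I \<sigma>" "0 \<le> C"
    and "\<And>i. i \<in> S \<Longrightarrow> i < length I \<and> arr I i = 0 \<and> 1 \<le> dur I i \<and> snd (\<sigma> i) \<noteq> []"
  shows "ennreal ((\<Sum>i\<in>S. sz I i) * (1 + C)) \<le> sched_cost C I \<sigma>"
proof (rule sched_cost_ge)
  have sz_nonneg: "0 \<le> sz I i" if "i < length I" for i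
    using assms(1) that by (simp add: valid_instance_def)
  show "0 \<le> (\<Sum>i\<in>S. sz I i)"
    using assms(4) by (intro sum_nonneg) (simp add: sz_nonneg)
  fix t :: real assume t: "0 \<le> t" "t < 1 + C"
  have "S \<subseteq> {i. present C I \<sigma> i t}"
  proof
    fix i assume "i \<in> S"
    with assms(4) have i: "i < length I" "arr I i = 0" "1 \<le> dur I i" "snd (\<sigma> i) \<noteq> []"
      by auto
    then have "C \<le> C * real (length (snd (\<sigma> i)))"
      using assms(3) by (simp add: Suc_le_eq mult_le_cancel_left1)
    with i t show "i \<in> {i. present C I \<sigma> i t}"
      by (simp add: present_def depart_def)
  qed
  then have "(\<Sum>i\<in>S. sz I i) \<le> (\<Sum>i | present C I \<sigma> i t. sz I i)"
    by (rule sum_mono2[OF finite_present]) (simp add: present_def sz_nonneg)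
  also have "\<dots> \<le> real (open_bins C I \<sigma> t)"
    by (rule sum_sz_present_le_open_bins[OF assms(2)])
  finally show "(\<Sum>i\<in>S. sz I i) \<le> real (open_bins C I \<sigma> t)" .
qed (use assms(3) in simp)

lemma card_le_card_unmigrated_bins_plus_card_migrated:
  fixes \<sigma> \<sigma>\<^sub>0 :: schedule
  assumes "finite L"
    and "\<And>i. i \<in> L \<Longrightarrow> fst (\<sigma> i) = fst (\<sigma>\<^sub>0 i)"
    and "\<And>i. i \<in> L \<Longrightarrow> filter (\<lambda>m. fst m \<le> t) (snd (\<sigma> i)) = filter (\<lambda>m. fst m \<le> t) (snd (\<sigma>\<^sub>0 i))"
    and "{i \<in> L. \<forall>m\<in>set (snd (\<sigma>\<^sub>0 i)). t < fst m} \<subseteq> G"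
  shows "real (card L) - real (card (collisions (\<lambda>i. fst (\<sigma>\<^sub>0 i)) (L \<inter> G))) / 2
           \<le> real (card ((\<lambda>i. fst (\<sigma> i)) ` {i \<in> L. snd (\<sigma> i) = []}))
              + real (card {i \<in> L. snd (\<sigma> i) \<noteq> []})"
proof -
  let ?U = "{i \<in> L. snd (\<sigma> i) = []}"
  have "?U \<subseteq> L \<inter> G"
  proof
    fix i assume i: "i \<in> ?U"
    with assms(3) have "filter (\<lambda>m. fst m \<le> t) (snd (\<sigma>\<^sub>0 i)) = []"
      by force
    then have "\<forall>m\<in>set (snd (\<sigma>\<^sub>0 i)). t < fst m"
      by (simp add: filter_empty_conv not_le)
    with i assms(4) show "i \<in> L \<inter> G"
      by blast
  qed
  from card_minus_collisions_le[OF assms(1) this, of "\<lambda>i. fst (\<sigma>\<^sub>0 i)"]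
  have "real (card L) - real (card (collisions (\<lambda>i. fst (\<sigma>\<^sub>0 i)) (L \<inter> G))) / 2
          \<le> real (card ((\<lambda>i. fst (\<sigma>\<^sub>0 i)) ` ?U)) + real (card (L - ?U))" .
  also have "(\<lambda>i. fst (\<sigma>\<^sub>0 i)) ` ?U = (\<lambda>i. fst (\<sigma> i)) ` ?U"
    using assms(2) by (intro image_cong) auto
  also have "L - ?U = {i \<in> L. snd (\<sigma> i) \<noteq> []}"
    by auto
  finally show ?thesis .
qed

lemma min_bins_le:
  assumes "\<forall>i\<in>S. f i < k" "\<forall>b. (\<Sum>i | i \<in> S \<and> f i = b. sz I i) \<le> 1"
  shows "min_bins I S \<le> k"
  unfolding min_bins_def by (rule Least_le) (use assms in blast)

lemma min_bins_empty: "min_bins I {} = 0"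
  using min_bins_le[of "{}" "\<lambda>_. 0" 0 I] by simp

lemma min_bins_le_1:
  assumes "(\<Sum>i\<in>S. sz I i) \<le> 1"
  shows "min_bins I S \<le> 1"
proof -
  have "{i. i \<in> S \<and> (0::nat) = b} = (if b = 0 then S else {})" for b
    by auto
  then show ?thesis
    using assms by (intro min_bins_le[where f = "\<lambda>_. 0"]) simp_all
qed

definition adversary_instance :: "nat \<Rightarrow> real \<Rightarrow> nat set \<Rightarrow> bp_instance" where
  "adversary_instance q \<mu> L = map (\<lambda>i. (0, 1 / real q, if i \<in> L then \<mu> else 1)) [0..<q * q]"

definition long_item_sets :: "nat \<Rightarrow> nat set set" where
  "long_item_sets q = {L. L \<subseteq> {..<q * q} \<and> card L = q}"

lemma finite_long_item_sets: "finite (long_item_sets q)"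
  unfolding long_item_sets_def by (rule finite_subset[of _ "Pow {..<q * q}"]) auto

lemma lessThan_in_long_item_sets: "{..<q} \<in> long_item_sets q"
  by (auto simp: long_item_sets_def intro: order_less_le_trans[OF _ le_square])

lemma length_adversary_instance [simp]: "length (adversary_instance q \<mu> L) = q * q"
  by (simp add: adversary_instance_def)

lemma arr_adversary_instance [simp]: "i < q * q \<Longrightarrow> arr (adversary_instance q \<mu> L) i = 0"
  by (simp add: adversary_instance_def arr_def)

lemma sz_adversary_instance [simp]: "i < q * q \<Longrightarrow> sz (adversary_instance q \<mu> L) i = 1 / real q"
  by (simp add: adversary_instance_def sz_def)

lemma dur_adversary_instance [simp]:
  "i < q * q \<Longrightarrow> dur (adversary_instance q \<mu> L) i = (if i \<in> L then \<mu> else 1)"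
  by (simp add: adversary_instance_def dur_def)

lemma valid_adversary_instance: "0 < \<mu> \<Longrightarrow> 1 \<le> q \<Longrightarrow> valid_instance (adversary_instance q \<mu> L)"
  by (auto simp: valid_instance_def adversary_instance_def o_def sorted_iff_nth_mono arr_def sz_def dur_def)

lemma sum_sz_adversary_instance:
  "S \<subseteq> {..<q * q} \<Longrightarrow> (\<Sum>i\<in>S. sz (adversary_instance q \<mu> L) i) = real (card S) / real q"
  by (subst sum.cong[OF refl, where h = "\<lambda>_. 1 / real q"]) auto

lemma observed_adversary_instance_0:
  assumes "0 \<le> C" "0 < \<mu>"
  shows "observed C (adversary_instance q \<mu> L) \<sigma> 0 = map (\<lambda>i. (0, 1 / real q, None)) [0..<q * q]"
proof -
  have "\<not> depart C (adversary_instance q \<mu> L) \<sigma> i \<le> 0" if "i < q * q" for i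
  proof -
    have "0 \<le> C * real (length (snd (\<sigma> i)))"
      using assms(1) by simp
    then show ?thesis
      using that assms(2) by (simp add: depart_def)
  qed
  then show ?thesis
    by (simp add: observed_def)
qed

lemma min_bins_adversary_instance_le:
  assumes "1 \<le> q" "S \<subseteq> {..<q * q}"
  shows "min_bins (adversary_instance q \<mu> L) S \<le> q"
proof (rule min_bins_le[where f = "\<lambda>i. i div q"])
  show "\<forall>i\<in>S. i div q < q"
    using assms by (auto simp: less_mult_imp_div_less)
  show "\<forall>b. (\<Sum>i | i \<in> S \<and> i div q = b. sz (adversary_instance q \<mu> L) i) \<le> 1"
  proof
    fix b
    have "{i \<in> S. i div q = b} \<subseteq> {b * q..<b * q + q}"
    proof
      fix i assume "i \<in> {i \<in> S. i div q = b}"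
      then have "b \<le> i div q" "i div q < b + 1" by auto
      then show "i \<in> {b * q..<b * q + q}"
        using assms(1) by (simp add: less_eq_div_iff_mult_less_eq div_less_iff_less_mult)
    qed
    then have "card {i \<in> S. i div q = b} \<le> q"
      using card_mono[of "{b * q..<b * q + q}"] by fastforce
    then show "(\<Sum>i | i \<in> S \<and> i div q = b. sz (adversary_instance q \<mu> L) i) \<le> 1"
      using assms by (subst sum_sz_adversary_instance) auto
  qed
qed

lemma OPT_t_adversary_instance_le:
  assumes "1 \<le> q" "1 \<le> \<mu>" "L \<in> long_item_sets q"
  shows "real (OPT_t (adversary_instance q \<mu> L) t)
           \<le> real q * indicator {0..<1} t + indicator {0..<\<mu>} t"
proof -
  let ?I = "adversary_instance q \<mu> L"
  define S where "S = {i. i < q * q \<and> 0 \<le> t \<and> t < (if i \<in> L then \<mu> else 1)}"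
  have OPT_t: "OPT_t ?I t = min_bins ?I S"
    unfolding OPT_t_def S_def by (rule arg_cong[where f = "min_bins ?I"]) auto
  have L: "L \<subseteq> {..<q * q}" "card L = q"
    using assms(3) by (auto simp: long_item_sets_def)
  consider "0 \<le> t" "t < 1" | "1 \<le> t" "t < \<mu>" | "t < 0 \<or> \<mu> \<le> t"
    by linarith
  then show ?thesis
  proof cases
    case 1
    have "min_bins ?I S \<le> q"
      using assms(1) by (intro min_bins_adversary_instance_le) (auto simp: S_def)
    then show ?thesis
      using 1 assms(2) by (simp add: OPT_t indicator_def)
  next
    case 2
    then have "S \<subseteq> L"
      by (auto simp: S_def split: if_splits)
    then have "(\<Sum>i\<in>S. sz ?I i) \<le> 1"
      using L assms(1) finite_subset[OF _ finite_lessThan]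
      by (subst sum_sz_adversary_instance) (auto simp: card_mono)
    then show ?thesis
      using 2 min_bins_le_1 by (simp add: OPT_t indicator_def)
  next
    case 3
    then have "S = {}"
      using assms(2) by (auto simp: S_def)
    then show ?thesis
      by (simp add: OPT_t min_bins_empty)
  qed
qed

lemma OPT_adversary_instance_le:
  assumes "1 \<le> q" "1 \<le> \<mu>" "L \<in> long_item_sets q"
  shows "OPT (adversary_instance q \<mu> L) \<le> ennreal (real q + \<mu>)"
proof -
  have "OPT (adversary_instance q \<mu> L)
          \<le> (\<integral>\<^sup>+ t. ennreal (real q * indicator {0..<1} t + indicator {0..<\<mu>} t) \<partial>lborel)"
    unfolding OPT_def using OPT_t_adversary_instance_le[OF assms]
    by (intro nn_integral_mono ennreal_leI)
  also have "\<dots> = (\<integral>\<^sup>+ t. ennreal (real q) * indicator {0..<1} t + indicator {0..<\<mu>} t \<partial>lborel)"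
    by (intro nn_integral_cong) (simp add: ennreal_plus ennreal_mult ennreal_indicator)
  also have "\<dots> = ennreal (real q + \<mu>)"
    using assms(2) by (simp add: nn_integral_add nn_integral_cmult_indicator ennreal_plus)
  finally show ?thesis .
qed

lemma card_same_initial_bin_le:
  assumes "valid_schedule C (adversary_instance q \<mu> L) \<sigma>" "0 \<le> C" "0 < \<mu>" "1 \<le> q"
  shows "card {i. i < q * q \<and> (\<forall>m\<in>set (snd (\<sigma> i)). 0 < fst m) \<and> fst (\<sigma> i) = \<beta>} \<le> q"
proof -
  let ?I = "adversary_instance q \<mu> L"
  let ?B = "{i. i < q * q \<and> (\<forall>m\<in>set (snd (\<sigma> i)). 0 < fst m) \<and> fst (\<sigma> i) = \<beta>}"
  have "present C ?I \<sigma> i 0 \<and> bin_at \<sigma> i 0 = fst (\<sigma> i)"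
    if "i < q * q" "\<forall>m\<in>set (snd (\<sigma> i)). 0 < fst m" for i
  proof -
    have "0 \<le> C * real (length (snd (\<sigma> i)))"
      using assms(2) by simp
    then show ?thesis
      using that assms(3) by (simp add: present_def depart_def bin_at_before_migrations)
  qed
  then have "?B \<subseteq> {i. present C ?I \<sigma> i 0 \<and> bin_at \<sigma> i 0 = \<beta>}"
    by auto
  then have "(\<Sum>i\<in>?B. sz ?I i) \<le> (\<Sum>i | present C ?I \<sigma> i 0 \<and> bin_at \<sigma> i 0 = \<beta>. sz ?I i)"
    by (intro sum_mono2) (auto simp: present_def intro: finite_subset[OF _ finite_present])
  also have "\<dots> \<le> 1"
    using assms(1) by (simp add: valid_schedule_def)
  finally show ?thesis
    using assms(4) by (subst (asm) sum_sz_adversary_instance) auto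
qed

lemma sched_cost_adversary_instance_ge:
  assumes "valid_schedule C (adversary_instance q \<mu> L) \<sigma>" "L \<in> long_item_sets q"
    and "0 \<le> C" "1 \<le> \<mu>" "1 \<le> q" "\<mu> * q \<le> 2 * (1 + C)"
  shows "ennreal (\<mu> / 4 * (real (card ((\<lambda>i. fst (\<sigma> i)) ` {i \<in> L. snd (\<sigma> i) = []}))
                            + real (card {i \<in> L. snd (\<sigma> i) \<noteq> []})))
           \<le> sched_cost C (adversary_instance q \<mu> L) \<sigma>"
proof -
  let ?I = "adversary_instance q \<mu> L"
  define a where "a = real (card ((\<lambda>i. fst (\<sigma> i)) ` {i \<in> L. snd (\<sigma> i) = []}))"
  define m where "m = real (card {i \<in> L. snd (\<sigma> i) \<noteq> []})"
  have L: "L \<subseteq> {..<q * q}"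
    using assms(2) by (simp add: long_item_sets_def)
  have unmigrated: "ennreal (a * \<mu>) \<le> sched_cost C ?I \<sigma>"
    unfolding a_def using L assms(4) by (intro sched_cost_ge_unmigrated) auto
  have "ennreal ((\<Sum>i | i \<in> L \<and> snd (\<sigma> i) \<noteq> []. sz ?I i) * (1 + C)) \<le> sched_cost C ?I \<sigma>"
    using L assms(1,3,4,5)
    by (intro sched_cost_ge_migrated valid_adversary_instance) auto
  moreover have "(\<Sum>i | i \<in> L \<and> snd (\<sigma> i) \<noteq> []. sz ?I i) = m / real q"
    unfolding m_def using L by (intro sum_sz_adversary_instance) auto
  ultimately have migrated: "ennreal (m / real q * (1 + C)) \<le> sched_cost C ?I \<sigma>"
    by simp
  have "\<mu> * q * m \<le> 2 * (1 + C) * m"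
    using assms(6) by (intro mult_right_mono) (simp_all add: m_def)
  then have half: "\<mu> / 2 * m \<le> m / real q * (1 + C)"
    using assms(5) by (simp add: field_simps)
  have "\<mu> / 4 * (a + m) \<le> a * \<mu> \<or> \<mu> / 4 * (a + m) \<le> m / real q * (1 + C)"
  proof (cases "a \<le> m")
    case True
    then have "\<mu> * a \<le> \<mu> * m"
      using assms(4) by (simp add: mult_left_mono)
    then show ?thesis
      using half unfolding distrib_left by linarith
  next
    case False
    then have "\<mu> * m \<le> \<mu> * a" "0 \<le> \<mu> * a"
      using assms(4) by (simp_all add: mult_left_mono a_def)
    then show ?thesis
      unfolding distrib_left mult.commute[of a] by linarith
  qed
  then show ?thesis
    unfolding a_def[symmetric] m_def[symmetric]
    using unmigrated migrated by (meson ennreal_leI order_trans)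
qed

lemma sum_card_collisions_long_item_sets_le:
  assumes "2 \<le> q" "G \<subseteq> {..<q * q}" "\<And>\<beta>. card {i \<in> G. f i = \<beta>} \<le> q"
  shows "(\<Sum>L\<in>long_item_sets q. real (card (collisions f (L \<inter> G))))
           \<le> real q * real (card (long_item_sets q))"
proof -
  let ?S = "\<Sum>L\<in>long_item_sets q. card (collisions f (L \<inter> G))"
  have "(q * q - 1) * ?S \<le> q * q * (q - 1) * (q * q choose q)"
    using sum_card_collisions_subsets_le[OF finite_lessThan assms(2,1,3)]
    by (simp add: long_item_sets_def)
  also have "q * q choose q = card (long_item_sets q)"
    by (simp add: long_item_sets_def n_subsets)
  finally have "real (q * q - 1) * real ?S \<le> real q * real q * real (q - 1) * real (card (long_item_sets q))"
    by (metis of_nat_le_iff of_nat_mult)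
  moreover have "real (q * q - 1) = (real q + 1) * real (q - 1)" "0 < real (q - 1)"
    using assms(1) by (simp_all add: of_nat_diff algebra_simps)
  ultimately have "(real q + 1) * real ?S \<le> real q * real q * real (card (long_item_sets q))"
    by (simp add: ac_simps)
  also have "\<dots> \<le> (real q + 1) * (real q * real (card (long_item_sets q)))"
    by (simp add: distrib_right)
  finally show ?thesis
    by simp
qed

lemma online_alg_sum_sched_cost_adversary_instance_ge:
  assumes "online_alg C A" "0 \<le> C" "1 \<le> \<mu>" "2 \<le> q" "\<mu> * q \<le> 2 * (1 + C)"
  shows "ennreal (real (card (long_item_sets q)) * (\<mu> * q / 8))
           \<le> (\<Sum>L\<in>long_item_sets q. sched_cost C (adversary_instance q \<mu> L) (A (adversary_instance q \<mu> L)))"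
proof -
  define \<sigma> where "\<sigma> L = A (adversary_instance q \<mu> L)" for L
  define initial_bin where "initial_bin i = fst (\<sigma> {} i)" for i
  define unmoved where "unmoved = {i. i < q * q \<and> (\<forall>m\<in>set (snd (\<sigma> {} i)). 0 < fst m)}"
  have valid: "valid_schedule C (adversary_instance q \<mu> L) (\<sigma> L)" for L
    using assms(1,3,4) valid_adversary_instance unfolding online_alg_def \<sigma>_def by simp
  have agree: "agree_upto (adversary_instance q \<mu> L) (\<sigma> L) (\<sigma> {}) 0" for L
    using assms(1-4) valid_adversary_instance observed_adversary_instance_0
    unfolding online_alg_def \<sigma>_def by simp
  define n where "n L = real (card ((\<lambda>i. fst (\<sigma> L i)) ` {i \<in> L. snd (\<sigma> L i) = []}))
                       + real (card {i \<in> L. snd (\<sigma> L i) \<noteq> []})" for L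
  have cost_ge: "ennreal (\<mu> / 4 * n L) \<le> sched_cost C (adversary_instance q \<mu> L) (\<sigma> L)"
    if "L \<in> long_item_sets q" for L
    unfolding n_def using assms(2-5)
    by (intro sched_cost_adversary_instance_ge[OF valid that]) auto
  have n_ge: "real q - real (card (collisions initial_bin (L \<inter> unmoved))) / 2 \<le> n L"
    if "L \<in> long_item_sets q" for L
  proof -
    have L: "L \<subseteq> {..<q * q}" "card L = q"
      using that by (simp_all add: long_item_sets_def)
    then show ?thesis
      using agree[of L] unfolding n_def initial_bin_def
      by (intro card_le_card_unmigrated_bins_plus_card_migrated[where t = 0, of L, simplified L])
        (auto simp: finite_subset agree_upto_def unmoved_def)
  qed
  have collisions_le: "(\<Sum>L\<in>long_item_sets q. real (card (collisions initial_bin (L \<inter> unmoved))))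
                         \<le> real q * real (card (long_item_sets q))"
    using assms(2-4) card_same_initial_bin_le[OF valid[of "{}"]]
    by (intro sum_card_collisions_long_item_sets_le) (auto simp: unmoved_def initial_bin_def conj_assoc)
  have "real (card (long_item_sets q)) * (\<mu> * q / 8)
          = \<mu> / 4 * (real (card (long_item_sets q)) * real q - real q * real (card (long_item_sets q)) / 2)"
    by (simp add: field_simps)
  also have "\<dots> \<le> \<mu> / 4 * (\<Sum>L\<in>long_item_sets q. real q - real (card (collisions initial_bin (L \<inter> unmoved))) / 2)"
    using collisions_le assms(3)
    by (intro mult_left_mono) (simp_all add: sum_subtractf sum_divide_distrib[symmetric])
  also have "\<dots> \<le> \<mu> / 4 * (\<Sum>L\<in>long_item_sets q. n L)"
    using n_ge assms(3) by (intro mult_left_mono sum_mono) auto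
  also have "\<dots> = (\<Sum>L\<in>long_item_sets q. \<mu> / 4 * n L)"
    by (simp add: sum_distrib_left)
  finally have "ennreal (real (card (long_item_sets q)) * (\<mu> * q / 8))
                  \<le> (\<Sum>L\<in>long_item_sets q. ennreal (\<mu> / 4 * n L))"
    using assms(3) by (simp add: ennreal_leI n_def)
  also have "\<dots> \<le> (\<Sum>L\<in>long_item_sets q. sched_cost C (adversary_instance q \<mu> L) (\<sigma> L))"
    by (intro sum_mono cost_ge)
  finally show ?thesis
    unfolding \<sigma>_def .
qed

(* ennreal satisfies the class axioms, but the library does not register this instance. *)
instance ennreal :: strict_ordered_comm_monoid_add ..

lemma ex_ge_of_card_mult_le_sum:
  fixes f :: "'a \<Rightarrow> 'b::{linorder, strict_ordered_comm_monoid_add, semiring_1}"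
  assumes "finite F" "F \<noteq> {}" "of_nat (card F) * x \<le> (\<Sum>L\<in>F. f L)"
  shows "\<exists>L\<in>F. x \<le> f L"
proof (rule ccontr)
  assume "\<not> ?thesis"
  then have "(\<Sum>L\<in>F. f L) < (\<Sum>L\<in>F. x)"
    using assms(1,2) by (intro sum_strict_mono) auto
  with assms(3) show False
    by simp
qed

lemma randomized_online_alg_expected_cost_adversary_instance_ge:
  assumes "randomized_online_alg C M A" "0 \<le> C" "1 \<le> \<mu>" "2 \<le> q" "\<mu> * q \<le> 2 * (1 + C)"
  shows "\<exists>L\<in>long_item_sets q. ennreal (\<mu> * q / 8) \<le> expected_cost C M A (adversary_instance q \<mu> L)"
proof (rule ex_ge_of_card_mult_le_sum[where f = "\<lambda>L. expected_cost C M A (adversary_instance q \<mu> L)"])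
  have prob: "prob_space M" and online: "\<And>\<omega>. \<omega> \<in> space M \<Longrightarrow> online_alg C (A \<omega>)"
    and measurable: "\<And>I. valid_instance I \<Longrightarrow> (\<lambda>\<omega>. sched_cost C I (A \<omega> I)) \<in> borel_measurable M"
    using assms(1) unfolding randomized_online_alg_def by auto
  have "of_nat (card (long_item_sets q)) * ennreal (\<mu> * q / 8)
          = (\<integral>\<^sup>+ \<omega>. ennreal (real (card (long_item_sets q)) * (\<mu> * q / 8)) \<partial>M)"
    using prob_space.emeasure_space_1[OF prob]
    by (simp add: ennreal_mult' ennreal_of_nat_eq_real_of_nat del: times_divide_eq_right)
  also have "\<dots> \<le> (\<integral>\<^sup>+ \<omega>. (\<Sum>L\<in>long_item_sets q.
                    sched_cost C (adversary_instance q \<mu> L) (A \<omega> (adversary_instance q \<mu> L))) \<partial>M)"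
    using online assms(2-5) by (intro nn_integral_mono online_alg_sum_sched_cost_adversary_instance_ge)
  also have "\<dots> = (\<Sum>L\<in>long_item_sets q. expected_cost C M A (adversary_instance q \<mu> L))"
    unfolding expected_cost_def using assms(3,4)
    by (intro nn_integral_sum measurable valid_adversary_instance) auto
  finally show "of_nat (card (long_item_sets q)) * ennreal (\<mu> * q / 8)
                  \<le> (\<Sum>L\<in>long_item_sets q. expected_cost C M A (adversary_instance q \<mu> L))" .
qed (use finite_long_item_sets lessThan_in_long_item_sets in auto)

theorem lemma19:
  fixes C :: real and M :: "'w measure" and A :: "'w \<Rightarrow> algorithm"
  assumes "C \<ge> 1"
    and "randomized_online_alg C M A"
  shows "\<exists>I. valid_instance I \<and> I \<noteq> [] \<and>
             (\<forall>i<length I. 1 \<le> dur I i \<and> dur I i \<le> sqrt C) \<and>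
             expected_cost C M A I \<ge> ennreal (sqrt C / 30) * OPT I"
proof -
  define \<mu> where "\<mu> = sqrt C"
  define q where "q = nat \<lfloor>\<mu>\<rfloor> + 1"
  have \<mu>: "1 \<le> \<mu>" "\<mu> * \<mu> = C"
    using assms(1) by (simp_all add: \<mu>_def)
  have q: "\<mu> < q" "q \<le> \<mu> + 1" "2 \<le> q"
    using \<mu>(1) unfolding q_def by linarith+
  have "\<mu> * q \<le> \<mu> * (\<mu> + 1)"
    using q(2) \<mu>(1) by (intro mult_left_mono) auto
  moreover have "\<mu> \<le> C"
    using mult_left_mono[of 1 \<mu> \<mu>] \<mu> by simp
  ultimately have "\<mu> * q \<le> 2 * (1 + C)"
    using \<mu> by (simp add: algebra_simps)
  then obtain L where L: "L \<in> long_item_sets q"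
    and cost: "ennreal (\<mu> * q / 8) \<le> expected_cost C M A (adversary_instance q \<mu> L)"
    using randomized_online_alg_expected_cost_adversary_instance_ge[OF assms(2)] assms(1) \<mu>(1) q(3)
    by auto
  have "ennreal (\<mu> / 30) * OPT (adversary_instance q \<mu> L) \<le> ennreal (\<mu> / 30) * ennreal (q + \<mu>)"
    using OPT_adversary_instance_le[OF _ \<mu>(1) L] q by (intro mult_left_mono) auto
  also have "\<dots> \<le> ennreal (\<mu> * q / 8)"
    using \<mu>(1) q(1) by (simp add: ennreal_mult[symmetric] del: ennreal_plus)
  finally have OPT_le: "ennreal (\<mu> / 30) * OPT (adversary_instance q \<mu> L) \<le> ennreal (\<mu> * q / 8)" .
  have "adversary_instance q \<mu> L \<noteq> []"
    using q(3) length_adversary_instance[of q \<mu> L] by (metis length_0_conv mult_is_0 not_numeral_le_zero)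
  then show ?thesis
    using OPT_le cost \<mu>(1) q(3) valid_adversary_instance[of \<mu> q L]
    by (intro exI[of _ "adversary_instance q \<mu> L"]) (auto simp: \<mu>_def)
qed

end
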